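(* Let $A,M\in\mathbb{R}^{n\times n}$ with $M$ nonsingular, $B\in\mathbb{R}^{n\times r}$, $j_{\max}\ge1$, shifts $\alpha_1,\ldots,\alpha_{j_{\max}}\in\mathbb{C}$ with $\mathrm{Re}(\alpha_k)<0$ and $A+\alpha_kM$ nonsingular, and $0<\varepsilon<1$. Run the inexact LR-ADI iteration of the context for $j_{\max}$ steps, and set $\sigma_k:=\|M(A+\alpha_kM)^{-1}\|$. (a) If for all $1\le k\le j_{\max}$ $$\|s_k\|\le\tfrac12\Big(\sqrt{\|w_{k-1}\|^2+\tfrac{2\varepsilon}{\sigma_k\gamma_k^2j_{\max}}}-\|w_{k-1}\|\Big),$$ then $\|\Delta\mathcal{R}_{j_{\max}}\|\le\varepsilon$. (b) If for all $1\le k\le j_{\max}$ $$\|s_k\|\le\tfrac12\Big(\sqrt{\|w_{k-1}\|^2+\Big(\tfrac{k\varepsilon}{j_{\max}}-2\|\eta_{k-1}\|\Big)\tfrac{2}{\sigma_k\gamma_k^2}}-\|w_{k-1}\|\Big),$$ then $\|\Delta\mathcal{R}_{j_{\max}}\|\le\varepsilon$.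
   Context: Inexact LR-ADI iteration: $w_0:=B$, $\gamma_k:=\sqrt{-2\,\mathrm{Re}(\alpha_k)}$; for $k\ge1$, $v_k\in\mathbb{C}^{n\times r}$ is an arbitrary approximate solution of $(A+\alpha_kM)v=w_{k-1}$ with residual $s_k:=w_{k-1}-(A+\alpha_kM)v_k$, $w_k:=w_{k-1}+\gamma_k^2Mv_k$, $Z_k:=[\gamma_1v_1,\ldots,\gamma_kv_k]$, $S_k:=[s_1,\ldots,s_k]$, $\Gamma_k:=\mathrm{diag}(\gamma_1,\ldots,\gamma_k)\otimes I_r$. True residual $\mathcal{R}^{\mathrm{true}}_k:=AZ_kZ_k^*M^*+MZ_kZ_k^*A^*+BB^*$, computed residual $\mathcal{R}^{\mathrm{comp}}_k:=w_kw_k^*$, residual gap $\Delta\mathcal{R}_k:=\mathcal{R}^{\mathrm{true}}_k-\mathcal{R}^{\mathrm{comp}}_k$, and $\eta_k:=-S_k\Gamma_kZ_k^*M^*$ for $k\ge1$, $\eta_0:=0$. Norms are spectral. *)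

theory Defs
  imports "HOL-Analysis.Analysis"
begin

definition cmat :: "real^'c^'d \<Rightarrow> complex^'c^'d" where
  "cmat X = (\<chi> i j. complex_of_real (X $ i $ j))"

definition adj :: "complex^'c^'d \<Rightarrow> complex^'d^'c" where
  "adj X = (\<chi> i j. cnj (X $ j $ i))"

definition snorm :: "complex^'c^'d \<Rightarrow> real" where
  "snorm X = onorm (\<lambda>x. X *v x)"

definition adi_gamma :: "(nat \<Rightarrow> complex) \<Rightarrow> nat \<Rightarrow> real" where
  "adi_gamma \<alpha> k = sqrt (- 2 * Re (\<alpha> k))"

primrec adi_w :: "real^'n^'n \<Rightarrow> real^'r^'n \<Rightarrow> (nat \<Rightarrow> complex) \<Rightarrow> (nat \<Rightarrow> complex^'r^'n)
                   \<Rightarrow> nat \<Rightarrow> complex^'r^'n" where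
  "adi_w M B \<alpha> v 0 = cmat B"
| "adi_w M B \<alpha> v (Suc k) = adi_w M B \<alpha> v k + ((adi_gamma \<alpha> (Suc k))\<^sup>2) *\<^sub>R (cmat M ** v (Suc k))"

definition adi_s :: "real^'n^'n \<Rightarrow> real^'n^'n \<Rightarrow> real^'r^'n \<Rightarrow> (nat \<Rightarrow> complex)
                   \<Rightarrow> (nat \<Rightarrow> complex^'r^'n) \<Rightarrow> nat \<Rightarrow> complex^'r^'n" where
  "adi_s A M B \<alpha> v k = adi_w M B \<alpha> v (k - 1) - (cmat A + mat (\<alpha> k) ** cmat M) ** v k"

text \<open>Z_k Z_k^* = sum_{i=1..k} (gamma_i v_i)(gamma_i v_i)^*.\<close>
definition adi_ZZ :: "(nat \<Rightarrow> complex) \<Rightarrow> (nat \<Rightarrow> complex^'r^'n) \<Rightarrow> nat \<Rightarrow> complex^'n^'n" where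
  "adi_ZZ \<alpha> v k = (\<Sum>i=1..k. (adi_gamma \<alpha> i *\<^sub>R v i) ** adj (adi_gamma \<alpha> i *\<^sub>R v i))"

definition adi_Rtrue :: "real^'n^'n \<Rightarrow> real^'n^'n \<Rightarrow> real^'r^'n \<Rightarrow> (nat \<Rightarrow> complex)
                   \<Rightarrow> (nat \<Rightarrow> complex^'r^'n) \<Rightarrow> nat \<Rightarrow> complex^'n^'n" where
  "adi_Rtrue A M B \<alpha> v k =
     cmat A ** adi_ZZ \<alpha> v k ** adj (cmat M) + cmat M ** adi_ZZ \<alpha> v k ** adj (cmat A)
     + cmat B ** adj (cmat B)"

definition adi_gap :: "real^'n^'n \<Rightarrow> real^'n^'n \<Rightarrow> real^'r^'n \<Rightarrow> (nat \<Rightarrow> complex)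
                   \<Rightarrow> (nat \<Rightarrow> complex^'r^'n) \<Rightarrow> nat \<Rightarrow> complex^'n^'n" where
  "adi_gap A M B \<alpha> v k = adi_Rtrue A M B \<alpha> v k - adi_w M B \<alpha> v k ** adj (adi_w M B \<alpha> v k)"

text \<open>eta_k = - S_k Gamma_k Z_k^* M^* = - sum_{i=1..k} (gamma_i s_i)(gamma_i v_i)^* M^*;
  for k = 0 the sum is empty, so eta_0 = 0.\<close>
definition adi_eta :: "real^'n^'n \<Rightarrow> real^'n^'n \<Rightarrow> real^'r^'n \<Rightarrow> (nat \<Rightarrow> complex)
                   \<Rightarrow> (nat \<Rightarrow> complex^'r^'n) \<Rightarrow> nat \<Rightarrow> complex^'n^'n" where
  "adi_eta A M B \<alpha> v k =
     - (\<Sum>i=1..k. (adi_gamma \<alpha> i *\<^sub>R adi_s A M B \<alpha> v i) ** adj (adi_gamma \<alpha> i *\<^sub>R v i) ** adj (cmat M))"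

definition adi_sigma :: "real^'n^'n \<Rightarrow> real^'n^'n \<Rightarrow> (nat \<Rightarrow> complex) \<Rightarrow> nat \<Rightarrow> real" where
  "adi_sigma A M \<alpha> k = snorm (cmat M ** matrix_inv (cmat A + mat (\<alpha> k) ** cmat M))"

end

theory Submission
  imports Defs
begin

text \<open>Expanding \<open>w\<^sub>k w\<^sub>k\<^sup>*\<close> with \<open>w\<^sub>k\<^sub>-\<^sub>1 = s\<^sub>k + (A + \<alpha>\<^sub>k M) v\<^sub>k\<close>, the terms in
  \<open>M v\<^sub>k v\<^sub>k\<^sup>* M\<^sup>*\<close> carry the factor \<open>\<gamma>\<^sub>k\<^sup>2 (\<alpha>\<^sub>k + cnj \<alpha>\<^sub>k + \<gamma>\<^sub>k\<^sup>2) = 0\<close>, and what is left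
  differs from the increment of the true residual by \<open>-\<gamma>\<^sub>k\<^sup>2 (s\<^sub>k (M v\<^sub>k)\<^sup>* + M v\<^sub>k s\<^sub>k\<^sup>*)\<close>.
  So the residual gap is \<open>\<eta>\<^sub>k + \<eta>\<^sub>k\<^sup>*\<close>, whence \<open>\<parallel>\<Delta>R\<^sub>k\<parallel> \<le> 2\<parallel>\<eta>\<^sub>k\<parallel>\<close>, and
  \<open>\<eta>\<^sub>k = \<eta>\<^sub>k\<^sub>-\<^sub>1 - \<gamma>\<^sub>k\<^sup>2 s\<^sub>k (M v\<^sub>k)\<^sup>*\<close>. As \<open>M v\<^sub>k = M (A + \<alpha>\<^sub>k M)\<^sup>-\<^sup>1 (w\<^sub>k\<^sub>-\<^sub>1 - s\<^sub>k)\<close>,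
  one step raises \<open>2\<parallel>\<eta>\<parallel>\<close> by at most \<open>2 \<sigma>\<^sub>k \<gamma>\<^sub>k\<^sup>2 x (x + \<parallel>w\<^sub>k\<^sub>-\<^sub>1\<parallel>)\<close> with \<open>x = \<parallel>s\<^sub>k\<parallel>\<close>.
  Either residual bound says that \<open>x\<close> lies below the positive root of this quadratic set equal
  to a budget \<open>d\<^sub>k\<close>, namely \<open>\<epsilon>/j\<^sub>m\<^sub>a\<^sub>x\<close> in (a) and \<open>k\<epsilon>/j\<^sub>m\<^sub>a\<^sub>x - 2\<parallel>\<eta>\<^sub>k\<^sub>-\<^sub>1\<parallel>\<close> in (b),
  so \<open>2\<parallel>\<eta>\<^sub>k\<parallel> \<le> k\<epsilon>/j\<^sub>m\<^sub>a\<^sub>x\<close> throughout.\<close>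

lemma matrix_add_rdistrib: "((A::'a::semiring_1^'n^'m) + B) ** C = A ** C + B ** C"
  by (simp add: matrix_matrix_mult_def vec_eq_iff sum.distrib distrib_right)

lemma uminus_matrix_vector_mult: "(- (A::'a::ring_1^'n^'m)) *v x = - (A *v x)"
  by (simp add: matrix_vector_mult_def vec_eq_iff sum_negf)

lemma scaleR_matrix_vector_mult: "(r *\<^sub>R (A::'a::real_algebra_1^'n^'m)) *v x = r *\<^sub>R (A *v x)"
  by (simp add: matrix_vector_mult_def vec_eq_iff scaleR_sum_right)

lemma matrix_inv_left: "invertible (A::'a::semiring_1^'n^'m) \<Longrightarrow> matrix_inv A ** A = mat 1"
  unfolding invertible_def matrix_inv_def by (rule someI2_ex) auto

lemma mat_matrix_mult: "mat c ** (X::'a::comm_semiring_1^'n^'m) = (\<chi> i j. c * X $ i $ j)"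
  by (simp add: mat_def matrix_matrix_mult_def vec_eq_iff if_distrib if_distribR cong: if_cong)

lemma mat_cnj_matrix_mult_add:
  "mat c ** (X::complex^'n^'m) + mat (cnj c) ** X = (2 * Re c) *\<^sub>R X"
proof -
  have "c * z + cnj c * z = (2 * Re c) *\<^sub>R z" for z
    by (simp add: scaleR_conv_of_real complex_add_cnj flip: distrib_right)
  then show ?thesis
    by (simp add: mat_matrix_mult vec_eq_iff)
qed

lemma adj_adj [simp]: "adj (adj X) = X"
  by (simp add: adj_def vec_eq_iff)

lemma adj_zero [simp]: "adj 0 = 0"
  by (simp add: adj_def vec_eq_iff)

lemma adj_add: "adj (X + Y) = adj X + adj Y"
  by (simp add: adj_def vec_eq_iff)

lemma adj_diff: "adj (X - Y) = adj X - adj Y"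
  by (simp add: adj_def vec_eq_iff)

lemma adj_scaleR: "adj (r *\<^sub>R X) = r *\<^sub>R adj X"
  by (simp add: adj_def vec_eq_iff scaleR_conv_of_real[where 'a=complex])

lemma adj_matrix_mult: "adj ((X::complex^'n^'m) ** (Y::complex^'p^'n)) = adj Y ** adj X"
  by (simp add: adj_def vec_eq_iff matrix_matrix_mult_def mult.commute)

lemma adj_mat_matrix_mult: "adj (mat c ** X) = mat (cnj c) ** adj X"
  by (simp add: adj_def mat_matrix_mult vec_eq_iff)

lemma inner_complex_eq_Re_mult_cnj: "inner (z::complex) w = Re (z * cnj w)"
  by (simp add: inner_complex_def)

lemma inner_adj_matrix_vector_mult:
  "inner (adj (X::complex^'n^'m) *v y) z = inner y (X *v z)"
proof -
  have "inner (adj X *v y) z = Re (\<Sum>i\<in>UNIV. \<Sum>j\<in>UNIV. cnj (X$j$i) * y$j * cnj (z$i))"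
    by (simp add: inner_vec_def matrix_vector_mult_def adj_def inner_complex_eq_Re_mult_cnj
        sum_distrib_right Re_sum)
  also have "\<dots> = Re (\<Sum>j\<in>UNIV. \<Sum>i\<in>UNIV. cnj (X$j$i) * y$j * cnj (z$i))"
    by (subst sum.swap) simp
  also have "\<dots> = inner y (X *v z)"
    by (simp add: inner_vec_def matrix_vector_mult_def inner_complex_eq_Re_mult_cnj
        sum_distrib_left Re_sum mult_ac)
  finally show ?thesis .
qed

lemma snorm_nonneg: "0 \<le> snorm X"
  unfolding snorm_def by (rule onorm_pos_le) simp

lemma snorm_zero [simp]: "snorm 0 = 0"
  by (simp add: snorm_def onorm_zero)

lemma norm_matrix_vector_mult_le: "norm (X *v x) \<le> snorm X * norm x"
  unfolding snorm_def by (rule onorm) simp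

lemma snorm_matrix_mult_le: "snorm ((X::complex^'n^'m) ** (Y::complex^'p^'n)) \<le> snorm X * snorm Y"
proof -
  have "(\<lambda>x. (X ** Y) *v x) = (\<lambda>x. X *v x) \<circ> (\<lambda>x. Y *v x)"
    by (auto simp: matrix_vector_mul_assoc)
  then show ?thesis
    unfolding snorm_def by (metis onorm_compose matrix_vector_mul_bounded_linear)
qed

lemma snorm_add_le: "snorm (X + Y) \<le> snorm X + snorm Y"
  unfolding snorm_def matrix_vector_mult_add_rdistrib by (rule onorm_triangle) simp_all

lemma snorm_uminus: "snorm (- X) = snorm X"
  unfolding snorm_def uminus_matrix_vector_mult by (rule onorm_neg)

lemma snorm_diff_le: "snorm (X - Y) \<le> snorm X + snorm Y"
  using snorm_add_le[of X "- Y"] by (simp add: snorm_uminus)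

lemma snorm_scaleR: "snorm (r *\<^sub>R X) = \<bar>r\<bar> * snorm X"
  unfolding snorm_def scaleR_matrix_vector_mult by (rule onorm_scaleR) simp

lemma snorm_adj_le: "snorm (adj X) \<le> snorm X"
  unfolding snorm_def
proof (rule onorm_bound)
  show "0 \<le> onorm ((*v) X)"
    using snorm_nonneg by (simp add: snorm_def)
  fix y
  define u where "u = adj X *v y"
  have "norm u * norm u = inner u u"
    by (metis power2_eq_square power2_norm_eq_inner)
  also have "\<dots> = inner y (X *v u)"
    unfolding u_def by (rule inner_adj_matrix_vector_mult)
  also have "\<dots> \<le> norm y * (snorm X * norm u)"
    by (meson norm_cauchy_schwarz norm_matrix_vector_mult_le norm_ge_zero mult_left_mono order_trans)
  finally have "norm u \<le> snorm X * norm y"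
    by (cases "norm u = 0") (auto simp: snorm_nonneg mult_ac)
  then show "norm (adj X *v y) \<le> onorm ((*v) X) * norm y"
    by (simp add: u_def snorm_def)
qed

lemma snorm_adj [simp]: "snorm (adj X) = snorm X"
  using snorm_adj_le[of X] snorm_adj_le[of "adj X"] by simp

lemma outer_product_adi_update:
  fixes A M :: "complex^'n^'n" and S V W :: "complex^'r^'n" and g :: real
  assumes W: "W = S + (A + mat c ** M) ** V" and g: "g\<^sup>2 = - 2 * Re c"
  shows "(W + g\<^sup>2 *\<^sub>R (M ** V)) ** adj (W + g\<^sup>2 *\<^sub>R (M ** V))
    = W ** adj W + g\<^sup>2 *\<^sub>R (A ** (V ** adj V) ** adj M + M ** (V ** adj V) ** adj A)
      + g\<^sup>2 *\<^sub>R (S ** adj (M ** V) + adj (S ** adj (M ** V)))"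
proof -
  define X where "X = M ** V"
  define P where "P = X ** adj X"
  have WX: "W ** adj X = S ** adj X + A ** V ** adj X + mat c ** P"
    by (simp add: W P_def X_def matrix_add_rdistrib matrix_mul_assoc)
  have "X ** adj W = adj (W ** adj X)"
    by (simp add: adj_matrix_mult)
  also have "\<dots> = adj (S ** adj X) + adj (A ** V ** adj X) + mat (cnj c) ** adj P"
    unfolding WX adj_add adj_mat_matrix_mult ..
  finally have XW: "X ** adj W = X ** adj S + X ** adj V ** adj A + mat (cnj c) ** P"
    by (simp add: P_def adj_matrix_mult matrix_mul_assoc)
  have "(W + g\<^sup>2 *\<^sub>R X) ** adj (W + g\<^sup>2 *\<^sub>R X)
      = W ** adj W + g\<^sup>2 *\<^sub>R (W ** adj X + X ** adj W) + (g\<^sup>2 * g\<^sup>2) *\<^sub>R P"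
    by (simp add: matrix_add_rdistrib matrix_add_ldistrib adj_add adj_scaleR P_def
        matrix_scalar_ac scaleR_add_right flip: scalar_matrix_assoc)
  also have "\<dots> = W ** adj W + g\<^sup>2 *\<^sub>R (S ** adj X + X ** adj S + A ** V ** adj X + X ** adj V ** adj A)
      + g\<^sup>2 *\<^sub>R (mat c ** P + mat (cnj c) ** P + g\<^sup>2 *\<^sub>R P)"
    unfolding WX XW by (simp add: algebra_simps)
  also have "mat c ** P + mat (cnj c) ** P + g\<^sup>2 *\<^sub>R P = 0"
    by (simp add: mat_cnj_matrix_mult_add g flip: scaleR_add_left)
  finally show ?thesis
    by (simp add: X_def adj_matrix_mult matrix_mul_assoc algebra_simps)
qed

lemma adi_w_eq_adi_s_add: "adi_w M B \<alpha> v k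
    = adi_s A M B \<alpha> v (Suc k) + (cmat A + mat (\<alpha> (Suc k)) ** cmat M) ** v (Suc k)"
  by (simp add: adi_s_def)

lemma adi_ZZ_Suc: "adi_ZZ \<alpha> v (Suc k)
    = adi_ZZ \<alpha> v k + (adi_gamma \<alpha> (Suc k))\<^sup>2 *\<^sub>R (v (Suc k) ** adj (v (Suc k)))"
  by (simp add: adi_ZZ_def adj_scaleR matrix_scalar_ac power2_eq_square flip: scalar_matrix_assoc)

lemma adi_eta_Suc: "adi_eta A M B \<alpha> v (Suc k) = adi_eta A M B \<alpha> v k
    - (adi_gamma \<alpha> (Suc k))\<^sup>2 *\<^sub>R (adi_s A M B \<alpha> v (Suc k) ** adj (cmat M ** v (Suc k)))"
  by (simp add: adi_eta_def adj_scaleR adj_matrix_mult matrix_scalar_ac matrix_mul_assoc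
      power2_eq_square flip: scalar_matrix_assoc)

lemma adi_gamma_sq: "Re (\<alpha> k) \<le> 0 \<Longrightarrow> (adi_gamma \<alpha> k)\<^sup>2 = - 2 * Re (\<alpha> k)"
  by (simp add: adi_gamma_def)

lemma adi_gap_eq_eta_plus_adj:
  assumes "\<And>i. 1 \<le> i \<Longrightarrow> i \<le> k \<Longrightarrow> Re (\<alpha> i) \<le> 0"
  shows "adi_gap A M B \<alpha> v k = adi_eta A M B \<alpha> v k + adj (adi_eta A M B \<alpha> v k)"
  using assms
proof (induction k)
  case 0
  then show ?case
    by (simp add: adi_gap_def adi_Rtrue_def adi_ZZ_def adi_eta_def)
next
  case (Suc k)
  let ?g = "adi_gamma \<alpha> (Suc k)" and ?V = "v (Suc k)" and ?S = "adi_s A M B \<alpha> v (Suc k)"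
  have Rtrue: "adi_Rtrue A M B \<alpha> v (Suc k) = adi_Rtrue A M B \<alpha> v k
      + ?g\<^sup>2 *\<^sub>R (cmat A ** (?V ** adj ?V) ** adj (cmat M) + cmat M ** (?V ** adj ?V) ** adj (cmat A))"
    by (simp add: adi_Rtrue_def adi_ZZ_Suc matrix_add_ldistrib matrix_add_rdistrib
        matrix_scalar_ac algebra_simps flip: scalar_matrix_assoc)
  have ww: "adi_w M B \<alpha> v (Suc k) ** adj (adi_w M B \<alpha> v (Suc k))
      = adi_w M B \<alpha> v k ** adj (adi_w M B \<alpha> v k)
        + ?g\<^sup>2 *\<^sub>R (cmat A ** (?V ** adj ?V) ** adj (cmat M) + cmat M ** (?V ** adj ?V) ** adj (cmat A))
        + ?g\<^sup>2 *\<^sub>R (?S ** adj (cmat M ** ?V) + adj (?S ** adj (cmat M ** ?V)))"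
    unfolding adi_w.simps
    by (rule outer_product_adi_update[OF adi_w_eq_adi_s_add adi_gamma_sq]) (use Suc.prems in simp)
  have "adi_gap A M B \<alpha> v k = adi_eta A M B \<alpha> v k + adj (adi_eta A M B \<alpha> v k)"
    using Suc by simp
  then show ?case
    unfolding adi_gap_def Rtrue ww adi_eta_Suc
    by (simp add: adj_diff adj_scaleR adj_add algebra_simps)
qed

lemma snorm_adi_gap_le:
  assumes "\<And>i. 1 \<le> i \<Longrightarrow> i \<le> k \<Longrightarrow> Re (\<alpha> i) \<le> 0"
  shows "snorm (adi_gap A M B \<alpha> v k) \<le> 2 * snorm (adi_eta A M B \<alpha> v k)"
  using snorm_add_le[of "adi_eta A M B \<alpha> v k" "adj (adi_eta A M B \<alpha> v k)"]
  by (simp add: adi_gap_eq_eta_plus_adj[OF assms])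

lemma snorm_M_mult_v_le:
  assumes "invertible (cmat A + mat (\<alpha> (Suc k)) ** cmat M)"
  shows "snorm (cmat M ** v (Suc k))
    \<le> adi_sigma A M \<alpha> (Suc k) * (snorm (adi_w M B \<alpha> v k) + snorm (adi_s A M B \<alpha> v (Suc k)))"
proof -
  define T where "T = cmat A + mat (\<alpha> (Suc k)) ** cmat M"
  have "cmat M ** v (Suc k) = cmat M ** (matrix_inv T ** T) ** v (Suc k)"
    using matrix_inv_left[of T] assms by (simp add: T_def)
  also have "\<dots> = (cmat M ** matrix_inv T) ** (T ** v (Suc k))"
    by (simp only: matrix_mul_assoc)
  also have "T ** v (Suc k) = adi_w M B \<alpha> v k - adi_s A M B \<alpha> v (Suc k)"
    by (simp add: T_def adi_s_def)
  finally have "snorm (cmat M ** v (Suc k))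
      \<le> adi_sigma A M \<alpha> (Suc k) * snorm (adi_w M B \<alpha> v k - adi_s A M B \<alpha> v (Suc k))"
    by (simp add: adi_sigma_def T_def snorm_matrix_mult_le)
  also have "\<dots> \<le> adi_sigma A M \<alpha> (Suc k) * (snorm (adi_w M B \<alpha> v k) + snorm (adi_s A M B \<alpha> v (Suc k)))"
    by (intro mult_left_mono snorm_diff_le) (simp add: adi_sigma_def snorm_nonneg)
  finally show ?thesis .
qed

lemma snorm_adi_eta_Suc_le:
  assumes "invertible (cmat A + mat (\<alpha> (Suc k)) ** cmat M)"
  shows "snorm (adi_eta A M B \<alpha> v (Suc k)) \<le> snorm (adi_eta A M B \<alpha> v k)
    + (adi_gamma \<alpha> (Suc k))\<^sup>2 * adi_sigma A M \<alpha> (Suc k) * snorm (adi_s A M B \<alpha> v (Suc k))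
      * (snorm (adi_s A M B \<alpha> v (Suc k)) + snorm (adi_w M B \<alpha> v k))"
proof -
  let ?S = "adi_s A M B \<alpha> v (Suc k)" and ?g = "adi_gamma \<alpha> (Suc k)"
  have "snorm (?S ** adj (cmat M ** v (Suc k))) \<le> snorm ?S * snorm (cmat M ** v (Suc k))"
    using snorm_matrix_mult_le[of ?S "adj (cmat M ** v (Suc k))"] by simp
  also have "\<dots> \<le> snorm ?S * (adi_sigma A M \<alpha> (Suc k) * (snorm (adi_w M B \<alpha> v k) + snorm ?S))"
    by (intro mult_left_mono snorm_M_mult_v_le assms snorm_nonneg)
  finally have "?g\<^sup>2 * snorm (?S ** adj (cmat M ** v (Suc k)))
      \<le> ?g\<^sup>2 * (snorm ?S * (adi_sigma A M \<alpha> (Suc k) * (snorm (adi_w M B \<alpha> v k) + snorm ?S)))"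
    by (simp add: mult_left_mono)
  moreover have "snorm (adi_eta A M B \<alpha> v (Suc k))
      \<le> snorm (adi_eta A M B \<alpha> v k) + ?g\<^sup>2 * snorm (?S ** adj (cmat M ** v (Suc k)))"
    unfolding adi_eta_Suc by (rule order_trans[OF snorm_diff_le]) (simp add: snorm_scaleR)
  ultimately show ?thesis
    by (simp add: algebra_simps)
qed

lemma quadratic_le_of_le_positive_root:
  fixes p x w d :: real
  assumes "0 \<le> p" "0 \<le> x" "0 \<le> w" "0 \<le> d"
    and "x \<le> (1/2) * (sqrt (w\<^sup>2 + d * (2 / p)) - w)"
  shows "2 * p * x * (x + w) \<le> d"
proof (cases "p = 0")
  case False
  have "(2 * x + w)\<^sup>2 \<le> (sqrt (w\<^sup>2 + d * (2 / p)))\<^sup>2"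
    using assms by (intro power_mono) auto
  also have "\<dots> = w\<^sup>2 + d * (2 / p)"
    using assms by simp
  finally have "4 * x * (x + w) \<le> d * (2 / p)"
    by (simp add: power2_eq_square algebra_simps)
  then have "p / 2 * (4 * x * (x + w)) \<le> p / 2 * (d * (2 / p))"
    using assms by (intro mult_left_mono) auto
  with False show ?thesis
    by (simp add: field_simps)
qed (use assms in simp)

lemma adi_eta_Suc_le_budget:
  assumes "invertible (cmat A + mat (\<alpha> (Suc k)) ** cmat M)" and "0 \<le> d"
    and "snorm (adi_s A M B \<alpha> v (Suc k))
      \<le> (1/2) * (sqrt ((snorm (adi_w M B \<alpha> v k))\<^sup>2
          + d * (2 / (adi_sigma A M \<alpha> (Suc k) * (adi_gamma \<alpha> (Suc k))\<^sup>2)))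
        - snorm (adi_w M B \<alpha> v k))"
  shows "2 * snorm (adi_eta A M B \<alpha> v (Suc k)) \<le> 2 * snorm (adi_eta A M B \<alpha> v k) + d"
proof -
  have "2 * (adi_sigma A M \<alpha> (Suc k) * (adi_gamma \<alpha> (Suc k))\<^sup>2) * snorm (adi_s A M B \<alpha> v (Suc k))
      * (snorm (adi_s A M B \<alpha> v (Suc k)) + snorm (adi_w M B \<alpha> v k)) \<le> d"
    using assms(2,3)
    by (intro quadratic_le_of_le_positive_root) (simp_all add: adi_sigma_def snorm_nonneg)
  then show ?thesis
    using snorm_adi_eta_Suc_le[of A \<alpha> k M B v] assms(1) by (simp add: algebra_simps)
qed

lemma adi_eta_le_uniform:
  assumes inv: "\<And>k. 1 \<le> k \<Longrightarrow> k \<le> jmax \<Longrightarrow> invertible (cmat A + mat (\<alpha> k) ** cmat M)"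
    and "0 \<le> \<epsilon>"
    and crit: "\<forall>k. 1 \<le> k \<and> k \<le> jmax \<longrightarrow>
         snorm (adi_s A M B \<alpha> v k)
           \<le> (1/2) * (sqrt ((snorm (adi_w M B \<alpha> v (k - 1)))\<^sup>2
                  + 2 * \<epsilon> / (adi_sigma A M \<alpha> k * (adi_gamma \<alpha> k)\<^sup>2 * real jmax))
                 - snorm (adi_w M B \<alpha> v (k - 1)))"
  shows "k \<le> jmax \<Longrightarrow> 2 * snorm (adi_eta A M B \<alpha> v k) \<le> real k * \<epsilon> / real jmax"
proof (induction k)
  case 0
  then show ?case by (simp add: adi_eta_def)
next
  case (Suc k)
  have "2 * snorm (adi_eta A M B \<alpha> v (Suc k)) \<le> 2 * snorm (adi_eta A M B \<alpha> v k) + \<epsilon> / real jmax"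
  proof (rule adi_eta_Suc_le_budget)
    have "2 * \<epsilon> / (p * real jmax) = \<epsilon> / real jmax * (2 / p)" for p
      by (simp add: mult.commute)
    then show "snorm (adi_s A M B \<alpha> v (Suc k))
      \<le> (1/2) * (sqrt ((snorm (adi_w M B \<alpha> v k))\<^sup>2
          + \<epsilon> / real jmax * (2 / (adi_sigma A M \<alpha> (Suc k) * (adi_gamma \<alpha> (Suc k))\<^sup>2)))
        - snorm (adi_w M B \<alpha> v k))"
      using crit Suc.prems by fastforce
  qed (use inv Suc.prems \<open>0 \<le> \<epsilon>\<close> in simp_all)
  with Suc show ?case
    by (simp add: add_divide_distrib distrib_right)
qed

lemma adi_eta_le_adaptive:
  assumes inv: "\<And>k. 1 \<le> k \<Longrightarrow> k \<le> jmax \<Longrightarrow> invertible (cmat A + mat (\<alpha> k) ** cmat M)"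
    and "0 \<le> \<epsilon>"
    and crit: "\<forall>k. 1 \<le> k \<and> k \<le> jmax \<longrightarrow>
         snorm (adi_s A M B \<alpha> v k)
           \<le> (1/2) * (sqrt ((snorm (adi_w M B \<alpha> v (k - 1)))\<^sup>2
                  + (real k * \<epsilon> / real jmax - 2 * snorm (adi_eta A M B \<alpha> v (k - 1)))
                    * (2 / (adi_sigma A M \<alpha> k * (adi_gamma \<alpha> k)\<^sup>2)))
                 - snorm (adi_w M B \<alpha> v (k - 1)))"
  shows "k \<le> jmax \<Longrightarrow> 2 * snorm (adi_eta A M B \<alpha> v k) \<le> real k * \<epsilon> / real jmax"
proof (induction k)
  case 0
  then show ?case by (simp add: adi_eta_def)
next
  case (Suc k)
  have "real k * \<epsilon> / real jmax \<le> real (Suc k) * \<epsilon> / real jmax"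
    using \<open>0 \<le> \<epsilon>\<close> by (simp add: divide_right_mono mult_right_mono)
  with Suc have budget: "0 \<le> real (Suc k) * \<epsilon> / real jmax - 2 * snorm (adi_eta A M B \<alpha> v k)"
    by simp
  have "2 * snorm (adi_eta A M B \<alpha> v (Suc k)) \<le> 2 * snorm (adi_eta A M B \<alpha> v k)
      + (real (Suc k) * \<epsilon> / real jmax - 2 * snorm (adi_eta A M B \<alpha> v k))"
    by (rule adi_eta_Suc_le_budget[OF _ budget]) (use inv crit Suc.prems in fastforce)+
  then show ?case
    by simp
qed

theorem theorem3p6:
  fixes A M :: "real^'n^'n" and B :: "real^'r^'n"
    and \<alpha> :: "nat \<Rightarrow> complex" and v :: "nat \<Rightarrow> complex^'r^'n"
    and jmax :: nat and \<epsilon> :: real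
  assumes "invertible M"
    and "jmax \<ge> 1"
    and "\<And>k. 1 \<le> k \<Longrightarrow> k \<le> jmax \<Longrightarrow> Re (\<alpha> k) < 0"
    and "\<And>k. 1 \<le> k \<Longrightarrow> k \<le> jmax \<Longrightarrow> invertible (cmat A + mat (\<alpha> k) ** cmat M)"
    and "0 < \<epsilon>" and "\<epsilon> < 1"
  shows
    "((\<forall>k. 1 \<le> k \<and> k \<le> jmax \<longrightarrow>
         snorm (adi_s A M B \<alpha> v k)
           \<le> (1/2) * (sqrt ((snorm (adi_w M B \<alpha> v (k - 1)))\<^sup>2
                  + 2 * \<epsilon> / (adi_sigma A M \<alpha> k * (adi_gamma \<alpha> k)\<^sup>2 * real jmax))
                 - snorm (adi_w M B \<alpha> v (k - 1))))
      \<longrightarrow> snorm (adi_gap A M B \<alpha> v jmax) \<le> \<epsilon>)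
   \<and> ((\<forall>k. 1 \<le> k \<and> k \<le> jmax \<longrightarrow>
         snorm (adi_s A M B \<alpha> v k)
           \<le> (1/2) * (sqrt ((snorm (adi_w M B \<alpha> v (k - 1)))\<^sup>2
                  + (real k * \<epsilon> / real jmax - 2 * snorm (adi_eta A M B \<alpha> v (k - 1)))
                    * (2 / (adi_sigma A M \<alpha> k * (adi_gamma \<alpha> k)\<^sup>2)))
                 - snorm (adi_w M B \<alpha> v (k - 1))))
      \<longrightarrow> snorm (adi_gap A M B \<alpha> v jmax) \<le> \<epsilon>)"
proof -
  have gap_le: "snorm (adi_gap A M B \<alpha> v jmax) \<le> \<epsilon>"
    if "2 * snorm (adi_eta A M B \<alpha> v jmax) \<le> real jmax * \<epsilon> / real jmax"
  proof -
    have "snorm (adi_gap A M B \<alpha> v jmax) \<le> 2 * snorm (adi_eta A M B \<alpha> v jmax)"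
      using assms(3) by (intro snorm_adi_gap_le) (simp add: less_imp_le)
    with that show ?thesis
      using assms(2) by simp
  qed
  have "0 \<le> \<epsilon>"
    using assms(5) by simp
  show ?thesis
    using adi_eta_le_uniform[where \<alpha>=\<alpha> and jmax=jmax, OF assms(4) \<open>0 \<le> \<epsilon>\<close> _ order_refl]
      adi_eta_le_adaptive[where \<alpha>=\<alpha> and jmax=jmax, OF assms(4) \<open>0 \<le> \<epsilon>\<close> _ order_refl] gap_le
    by blast
qed

end
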